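(* Let $A=(a_{ij})\in\overline{\mathbb{R}}^{n\times n}$. Then $A$ is pseudo-diagonalizable if and only if $A$ is finite and for all $i,j,k\in[n]$ with $k\neq i$ and $k\neq j$, $$a_{ik}+a_{kj}=\begin{cases} a_{ij} & \text{if } i\neq j,\\ 0 & \text{if } i=j.\end{cases}$$
   Context: Max-plus semiring: $\overline{\mathbb{R}}=\mathbb{R}\cup\{-\infty\}$ with $a\oplus b=\max\{a,b\}$, $a\otimes b=a+b$, $\varepsilon=-\infty$. Matrix operations: $(A\oplus B)_{ij}=\max(A_{ij},B_{ij})$, $(A\otimes B)_{ij}=\max_k(A_{ik}+B_{kj})$. $[n]=\{1,\dots,n\}$. A matrix is finite if all its entries are real. $I$ denotes the $n\times n$ matrix with $0$ on the diagonal and $\varepsilon$ elsewhere; $P\in\overline{\mathbb{R}}^{n\times n}$ is invertible if there is $Q$ with $P\otimes Q=Q\otimes P=I$ (equivalently, $P$ is a generalized permutation matrix: exactly one real entry in each row and each column, all other entries $\varepsilon$). Matrices $A,B\in\overline{\mathbb{R}}^{n\times n}$ are similar if $B=P^{-1}\otimes A\otimes P$ for some invertible $P$. A square matrix is pseudo-diagonal if its diagonal entries are real numbers and all its off-diagonal entries equal the real number $0$; $\mathrm{pdiag}(d_1,\dots,d_n)$ denotes the pseudo-diagonal matrix with diagonal entries $d_1,\dots,d_n$. A square matrix is pseudo-diagonalizable if it is similar to a pseudo-diagonal matrix. *)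

theory Defs
  imports "HOL-Library.Extended_Real"
begin

text \<open>Max-plus matrices: entries in ereal, restricted to R \<union> {-\<infinity>}
  (the entry +\<infinity> is excluded by the predicate mp_matrix). Indices range over a finite type 'n.\<close>

type_synonym 'n mpmat = "'n \<Rightarrow> 'n \<Rightarrow> ereal"

definition mp_matrix :: "('n::finite) mpmat \<Rightarrow> bool" where
  "mp_matrix A \<longleftrightarrow> (\<forall>i j. A i j \<noteq> \<infinity>)"

definition mp_mult :: "('n::finite) mpmat \<Rightarrow> 'n mpmat \<Rightarrow> 'n mpmat" (infixl "\<otimes>\<^sub>m\<^sub>p" 70) where
  "mp_mult A B = (\<lambda>i j. Max (range (\<lambda>k. A i k + B k j)))"

definition mp_id :: "('n::finite) mpmat" where
  "mp_id = (\<lambda>i j. if i = j then 0 else -\<infinity>)"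

definition mp_invertible :: "('n::finite) mpmat \<Rightarrow> bool" where
  "mp_invertible P \<longleftrightarrow> mp_matrix P \<and>
     (\<exists>Q. mp_matrix Q \<and> P \<otimes>\<^sub>m\<^sub>p Q = mp_id \<and> Q \<otimes>\<^sub>m\<^sub>p P = mp_id)"

definition mp_similar :: "('n::finite) mpmat \<Rightarrow> 'n mpmat \<Rightarrow> bool" where
  "mp_similar A B \<longleftrightarrow> (\<exists>P Q. mp_matrix P \<and> mp_matrix Q \<and>
       P \<otimes>\<^sub>m\<^sub>p Q = mp_id \<and> Q \<otimes>\<^sub>m\<^sub>p P = mp_id \<and> B = Q \<otimes>\<^sub>m\<^sub>p A \<otimes>\<^sub>m\<^sub>p P)"

definition mp_finite :: "('n::finite) mpmat \<Rightarrow> bool" where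
  "mp_finite A \<longleftrightarrow> (\<forall>i j. \<bar>A i j\<bar> \<noteq> \<infinity>)"

definition pseudo_diagonal :: "('n::finite) mpmat \<Rightarrow> bool" where
  "pseudo_diagonal D \<longleftrightarrow> (\<forall>i. \<bar>D i i\<bar> \<noteq> \<infinity>) \<and> (\<forall>i j. i \<noteq> j \<longrightarrow> D i j = 0)"

definition pseudo_diagonalizable :: "('n::finite) mpmat \<Rightarrow> bool" where
  "pseudo_diagonalizable A \<longleftrightarrow> (\<exists>D. pseudo_diagonal D \<and> mp_similar A D)"

end

theory Submission
  imports Defs
begin

text \<open>An invertible max-plus matrix is a generalized permutation matrix, and conjugating by one
  only permutes indices and shifts the entry at (a, b) by p b - p a. So A is
  pseudo-diagonalizable exactly when its diagonal is finite and its off-diagonal entries are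
  potential differences p a - p b. The triangle condition says precisely this, with the
  potential read off from any fixed column.\<close>

definition offdiag_potential :: "('n::finite) mpmat \<Rightarrow> ('n \<Rightarrow> real) \<Rightarrow> bool" where
  "offdiag_potential A p \<longleftrightarrow> (\<forall>a b. a \<noteq> b \<longrightarrow> A a b = ereal (p a - p b))"

lemma Max_range_eq_at_support:
  fixes f :: "'n::finite \<Rightarrow> ereal"
  assumes "\<And>k. k \<noteq> k0 \<Longrightarrow> f k = -\<infinity>"
  shows "Max (range f) = f k0"
  by (rule Max_eqI) (use assms in fastforce)+

lemma mp_mult_eq_id_entries:
  fixes P Q :: "('n::finite) mpmat"
  assumes "mp_matrix P" "mp_matrix Q" "P \<otimes>\<^sub>m\<^sub>p Q = mp_id"
  shows mp_mult_eq_id_diag: "\<exists>k. P i k + Q k i = 0"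
    and mp_mult_eq_id_offdiag: "i \<noteq> j \<Longrightarrow> P i k = -\<infinity> \<or> Q k j = -\<infinity>"
proof -
  have PQ: "Max (range (\<lambda>k. P i k + Q k j)) = (if i = j then 0 else -\<infinity>)" for i j
    using fun_cong[OF fun_cong[OF assms(3), of i], of j] unfolding mp_mult_def mp_id_def by simp
  have "Max (range (\<lambda>k. P i k + Q k i)) \<in> range (\<lambda>k. P i k + Q k i)"
    by (rule Max_in) auto
  then show "\<exists>k. P i k + Q k i = 0"
    using PQ[of i i] by auto
  assume "i \<noteq> j"
  have "P i k + Q k j \<le> Max (range (\<lambda>k. P i k + Q k j))"
    by (rule Max_ge) auto
  with \<open>i \<noteq> j\<close> have "P i k + Q k j \<le> -\<infinity>"
    using PQ[of i j] by simp
  moreover have "P i k \<noteq> \<infinity>" "Q k j \<noteq> \<infinity>"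
    using assms(1,2) unfolding mp_matrix_def by auto
  ultimately show "P i k = -\<infinity> \<or> Q k j = -\<infinity>"
    by (cases "P i k"; cases "Q k j") auto
qed

lemma mp_right_inverse_gen_perm:
  fixes P Q :: "('n::finite) mpmat"
  assumes mP: "mp_matrix P" and mQ: "mp_matrix Q" and PQ: "P \<otimes>\<^sub>m\<^sub>p Q = mp_id"
  obtains \<sigma> p where "bij \<sigma>"
    and "P = (\<lambda>i k. if k = \<sigma> i then ereal (p i) else -\<infinity>)"
    and "Q = (\<lambda>k i. if k = \<sigma> i then ereal (- p i) else -\<infinity>)"
proof -
  obtain \<sigma> where \<sigma>: "\<And>i. P i (\<sigma> i) + Q (\<sigma> i) i = 0"
    using mp_mult_eq_id_diag[OF mP mQ PQ] by metis
  define p where "p i = real_of_ereal (P i (\<sigma> i))" for i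
  have Pp: "P i (\<sigma> i) = ereal (p i)" and Qp: "Q (\<sigma> i) i = ereal (- p i)" for i
  proof -
    have "P i (\<sigma> i) \<noteq> \<infinity>" "Q (\<sigma> i) i \<noteq> \<infinity>"
      using mP mQ unfolding mp_matrix_def by auto
    with \<sigma>[of i] show "P i (\<sigma> i) = ereal (p i)" "Q (\<sigma> i) i = ereal (- p i)"
      unfolding p_def by (cases "P i (\<sigma> i)"; cases "Q (\<sigma> i) i"; auto)+
  qed
  have P_col: "P j (\<sigma> i) = -\<infinity>" if "j \<noteq> i" for i j
    using mp_mult_eq_id_offdiag[OF mP mQ PQ that, of "\<sigma> i"] Qp[of i] by auto
  have Q_row: "Q (\<sigma> j) i = -\<infinity>" if "j \<noteq> i" for i j
    using mp_mult_eq_id_offdiag[OF mP mQ PQ that, of "\<sigma> j"] Pp[of j] by auto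
  have "inj \<sigma>"
    by (rule injI, rule ccontr) (metis P_col Pp MInfty_neq_ereal(1))
  then have "bij \<sigma>"
    by (simp add: bij_def finite_UNIV_inj_surj)
  then have \<sigma>_cases: "\<exists>j. k = \<sigma> j" for k
    by (metis bij_pointE)
  have "P = (\<lambda>i k. if k = \<sigma> i then ereal (p i) else -\<infinity>)"
  proof (intro ext)
    fix i k
    show "P i k = (if k = \<sigma> i then ereal (p i) else -\<infinity>)"
      using Pp \<sigma>_cases[of k] by (cases "k = \<sigma> i") (auto intro!: P_col)
  qed
  moreover have "Q = (\<lambda>k i. if k = \<sigma> i then ereal (- p i) else -\<infinity>)"
  proof (intro ext)
    fix k i
    show "Q k i = (if k = \<sigma> i then ereal (- p i) else -\<infinity>)"
      using Qp \<sigma>_cases[of k] by (cases "k = \<sigma> i") (auto intro!: Q_row)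
  qed
  ultimately show thesis
    using \<open>bij \<sigma>\<close> that by blast
qed

lemma mp_gen_perm_inverse:
  fixes \<sigma> :: "'n::finite \<Rightarrow> 'n" and p :: "'n \<Rightarrow> real"
  assumes "bij \<sigma>"
  defines "P \<equiv> \<lambda>i k. if k = \<sigma> i then ereal (p i) else -\<infinity>"
    and "Q \<equiv> \<lambda>k i. if k = \<sigma> i then ereal (- p i) else -\<infinity>"
  shows "P \<otimes>\<^sub>m\<^sub>p Q = mp_id" and "Q \<otimes>\<^sub>m\<^sub>p P = mp_id"
proof -
  have inj: "\<sigma> i = \<sigma> j \<longleftrightarrow> i = j" for i j
    using assms(1) by (simp add: bij_def inj_eq)
  show "P \<otimes>\<^sub>m\<^sub>p Q = mp_id"
  proof (intro ext)
    fix i j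
    have "Max (range (\<lambda>k. P i k + Q k j)) = P i (\<sigma> i) + Q (\<sigma> i) j"
      by (rule Max_range_eq_at_support) (simp add: P_def Q_def)
    then show "(P \<otimes>\<^sub>m\<^sub>p Q) i j = mp_id i j"
      by (simp add: mp_mult_def mp_id_def P_def Q_def inj)
  qed
  show "Q \<otimes>\<^sub>m\<^sub>p P = mp_id"
  proof (intro ext)
    fix k l
    have "Max (range (\<lambda>i. Q k i + P i l)) = Q k (inv \<sigma> k) + P (inv \<sigma> k) l"
      by (rule Max_range_eq_at_support) (auto simp: P_def Q_def bij_inv_eq_iff[OF assms(1)])
    then show "(Q \<otimes>\<^sub>m\<^sub>p P) k l = mp_id k l"
      by (simp add: mp_mult_def mp_id_def P_def Q_def surj_f_inv_f[OF bij_is_surj[OF assms(1)]]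
          zero_ereal_def)
  qed
qed

lemma mp_conj_gen_perm:
  fixes A :: "('n::finite) mpmat" and p :: "'n \<Rightarrow> real"
  assumes "mp_matrix A" and "inj \<sigma>"
  defines "P \<equiv> \<lambda>i k. if k = \<sigma> i then ereal (p i) else -\<infinity>"
    and "Q \<equiv> \<lambda>k i. if k = \<sigma> i then ereal (- p i) else -\<infinity>"
  shows "(Q \<otimes>\<^sub>m\<^sub>p A \<otimes>\<^sub>m\<^sub>p P) (\<sigma> a) (\<sigma> b) = A a b + ereal (p b - p a)"
proof -
  have A_fin: "A i j \<noteq> \<infinity>" for i j
    using assms(1) unfolding mp_matrix_def by auto
  have inj: "\<sigma> i = \<sigma> j \<longleftrightarrow> i = j" for i j
    using assms(2) by (simp add: inj_eq)
  have QA: "(Q \<otimes>\<^sub>m\<^sub>p A) (\<sigma> a) y = A a y + ereal (- p a)" for y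
  proof -
    have "Max (range (\<lambda>k. Q (\<sigma> a) k + A k y)) = Q (\<sigma> a) a + A a y"
      by (rule Max_range_eq_at_support) (simp add: Q_def inj A_fin)
    then show ?thesis
      by (simp add: mp_mult_def Q_def add.commute)
  qed
  have "Max (range (\<lambda>y. (Q \<otimes>\<^sub>m\<^sub>p A) (\<sigma> a) y + P y (\<sigma> b))) =
      (Q \<otimes>\<^sub>m\<^sub>p A) (\<sigma> a) b + P b (\<sigma> b)"
    by (rule Max_range_eq_at_support) (simp add: P_def QA inj A_fin)
  then show ?thesis
    by (cases "A a b") (simp_all add: mp_mult_def[of "Q \<otimes>\<^sub>m\<^sub>p A"] QA P_def)
qed

lemma pseudo_diagonalizable_imp_potential:
  fixes A :: "('n::finite) mpmat"
  assumes A: "mp_matrix A" and "pseudo_diagonalizable A"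
  shows "(\<forall>a. \<bar>A a a\<bar> \<noteq> \<infinity>) \<and> (\<exists>p. offdiag_potential A p)"
proof -
  from \<open>pseudo_diagonalizable A\<close> obtain D P Q where D: "pseudo_diagonal D" and mP: "mp_matrix P" and mQ: "mp_matrix Q"
    and PQ: "P \<otimes>\<^sub>m\<^sub>p Q = mp_id" and DQAP: "D = Q \<otimes>\<^sub>m\<^sub>p A \<otimes>\<^sub>m\<^sub>p P"
    unfolding pseudo_diagonalizable_def mp_similar_def by blast
  obtain \<sigma> p where "bij \<sigma>"
    and "P = (\<lambda>i k. if k = \<sigma> i then ereal (p i) else -\<infinity>)"
    and "Q = (\<lambda>k i. if k = \<sigma> i then ereal (- p i) else -\<infinity>)"
    by (rule mp_right_inverse_gen_perm[OF mP mQ PQ])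
  then have D_\<sigma>: "D (\<sigma> a) (\<sigma> b) = A a b + ereal (p b - p a)" for a b
    using mp_conj_gen_perm[OF A, of \<sigma> p a b] DQAP by (simp add: bij_is_inj)
  have inj: "\<sigma> a = \<sigma> b \<longleftrightarrow> a = b" for a b
    using \<open>bij \<sigma>\<close> by (simp add: bij_def inj_eq)
  have "\<bar>A a a\<bar> \<noteq> \<infinity>" for a
  proof -
    have "\<bar>D (\<sigma> a) (\<sigma> a)\<bar> \<noteq> \<infinity>"
      using D unfolding pseudo_diagonal_def by (elim conjE) (erule allE)
    then show ?thesis
      using D_\<sigma>[of a a] by (cases "A a a") auto
  qed
  moreover have "offdiag_potential A p"
    unfolding offdiag_potential_def
  proof (intro allI impI)
    fix a b :: 'n assume "a \<noteq> b"
    then have "A a b + ereal (p b - p a) = 0"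
      using D D_\<sigma>[of a b] inj unfolding pseudo_diagonal_def by metis
    then show "A a b = ereal (p a - p b)"
      by (cases "A a b") (auto simp: zero_ereal_def)
  qed
  ultimately show ?thesis
    by blast
qed

lemma potential_imp_pseudo_diagonalizable:
  fixes A :: "('n::finite) mpmat"
  assumes A: "mp_matrix A" and diag: "\<And>a. \<bar>A a a\<bar> \<noteq> \<infinity>" and pot: "offdiag_potential A p"
  shows "pseudo_diagonalizable A"
proof -
  define P :: "'n mpmat" where "P = (\<lambda>i k. if k = i then ereal (p i) else -\<infinity>)"
  define Q :: "'n mpmat" where "Q = (\<lambda>k i. if k = i then ereal (- p i) else -\<infinity>)"
  have "P \<otimes>\<^sub>m\<^sub>p Q = mp_id" "Q \<otimes>\<^sub>m\<^sub>p P = mp_id"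
    using mp_gen_perm_inverse[OF bij_id, of p] unfolding P_def Q_def by simp_all
  moreover have "mp_matrix P" "mp_matrix Q"
    unfolding mp_matrix_def P_def Q_def by auto
  moreover have "pseudo_diagonal (Q \<otimes>\<^sub>m\<^sub>p A \<otimes>\<^sub>m\<^sub>p P)"
    unfolding pseudo_diagonal_def
  proof (intro conjI allI impI)
    have D_id: "(Q \<otimes>\<^sub>m\<^sub>p A \<otimes>\<^sub>m\<^sub>p P) a b = A a b + ereal (p b - p a)" for a b
      using mp_conj_gen_perm[OF A inj_on_id, of p a b] unfolding P_def Q_def by simp
    fix a
    show "\<bar>(Q \<otimes>\<^sub>m\<^sub>p A \<otimes>\<^sub>m\<^sub>p P) a a\<bar> \<noteq> \<infinity>"
      using D_id[of a a] diag[of a] by (cases "A a a") auto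
    fix b assume "a \<noteq> b"
    then show "(Q \<otimes>\<^sub>m\<^sub>p A \<otimes>\<^sub>m\<^sub>p P) a b = 0"
      using D_id[of a b] pot unfolding offdiag_potential_def by (simp add: zero_ereal_def)
  qed
  ultimately show ?thesis
    unfolding pseudo_diagonalizable_def mp_similar_def by blast
qed

lemma pseudo_diagonalizable_iff_potential:
  fixes A :: "('n::finite) mpmat"
  assumes "mp_matrix A"
  shows "pseudo_diagonalizable A \<longleftrightarrow> (\<forall>a. \<bar>A a a\<bar> \<noteq> \<infinity>) \<and> (\<exists>p. offdiag_potential A p)"
proof
  assume "(\<forall>a. \<bar>A a a\<bar> \<noteq> \<infinity>) \<and> (\<exists>p. offdiag_potential A p)"
  then obtain p where "\<And>a. \<bar>A a a\<bar> \<noteq> \<infinity>" "offdiag_potential A p"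
    by blast
  then show "pseudo_diagonalizable A"
    by (rule potential_imp_pseudo_diagonalizable[OF assms])
qed (rule pseudo_diagonalizable_imp_potential[OF assms])

lemma triangle_condition_iff_potential:
  fixes A :: "('n::finite) mpmat"
  shows "(mp_finite A \<and>
      (\<forall>i j k. k \<noteq> i \<and> k \<noteq> j \<longrightarrow> A i k + A k j = (if i \<noteq> j then A i j else 0)))
    \<longleftrightarrow> (\<forall>a. \<bar>A a a\<bar> \<noteq> \<infinity>) \<and> (\<exists>p. offdiag_potential A p)"
proof
  assume "mp_finite A \<and>
    (\<forall>i j k. k \<noteq> i \<and> k \<noteq> j \<longrightarrow> A i k + A k j = (if i \<noteq> j then A i j else 0))"
  then have fin: "mp_finite A"
    and tri: "\<And>i j k. k \<noteq> i \<Longrightarrow> k \<noteq> j \<Longrightarrow> A i k + A k j = (if i \<noteq> j then A i j else 0)"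
    by blast+
  define a where "a i j = real_of_ereal (A i j)" for i j
  have A_a: "A i j = ereal (a i j)" for i j
    using fin unfolding mp_finite_def a_def by (simp add: ereal_real')
  have tri_a: "a i k + a k j = (if i \<noteq> j then a i j else 0)" if "k \<noteq> i" "k \<noteq> j" for i j k
    using tri[OF that] unfolding A_a by (cases "i = j") (simp_all add: zero_ereal_def)
  obtain r :: 'n where True
    by blast
  \<comment> \<open>Any base point r works: the triangle condition through k = r gives a i j = a i r - a j r.\<close>
  define p where "p i = (if i = r then 0 else a i r)" for i
  have "offdiag_potential A p"
    unfolding offdiag_potential_def A_a
  proof (intro allI impI)
    fix i j :: 'n assume "i \<noteq> j"
    consider "i = r" | "j = r" | "i \<noteq> r" "j \<noteq> r"
      by blast
    then have "a i j = p i - p j"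
    proof cases
      case 1
      then show ?thesis
        using tri_a[of j r r] \<open>i \<noteq> j\<close> by (simp add: p_def)
    next
      case 2
      then show ?thesis
        using \<open>i \<noteq> j\<close> by (simp add: p_def)
    next
      case 3
      then show ?thesis
        using tri_a[of r i j] tri_a[of r j j] \<open>i \<noteq> j\<close> by (simp add: p_def)
    qed
    then show "ereal (a i j) = ereal (p i - p j)"
      by simp
  qed
  then show "(\<forall>a. \<bar>A a a\<bar> \<noteq> \<infinity>) \<and> (\<exists>p. offdiag_potential A p)"
    by (auto simp: A_a)
next
  assume "(\<forall>a. \<bar>A a a\<bar> \<noteq> \<infinity>) \<and> (\<exists>p. offdiag_potential A p)"
  then obtain p where diag: "\<And>a. \<bar>A a a\<bar> \<noteq> \<infinity>"
    and pot: "\<And>a b. a \<noteq> b \<Longrightarrow> A a b = ereal (p a - p b)"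
    unfolding offdiag_potential_def by blast
  have "mp_finite A"
    unfolding mp_finite_def
  proof (intro allI)
    fix i j
    show "\<bar>A i j\<bar> \<noteq> \<infinity>"
      using diag[of i] pot[of i j] by (cases "i = j") auto
  qed
  moreover have "A i k + A k j = (if i \<noteq> j then A i j else 0)" if "k \<noteq> i" "k \<noteq> j" for i j k
    using that pot by (simp add: zero_ereal_def)
  ultimately show "mp_finite A \<and>
      (\<forall>i j k. k \<noteq> i \<and> k \<noteq> j \<longrightarrow> A i k + A k j = (if i \<noteq> j then A i j else 0))"
    by blast
qed

theorem theorem3p3:
  fixes A :: "('n::finite) mpmat"
  assumes "mp_matrix A"
  shows "pseudo_diagonalizable A \<longleftrightarrow>
    (mp_finite A \<and>
     (\<forall>i j k. k \<noteq> i \<and> k \<noteq> j \<longrightarrow>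
        A i k + A k j = (if i \<noteq> j then A i j else 0)))"
  unfolding pseudo_diagonalizable_iff_potential[OF assms] triangle_condition_iff_potential ..

end
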